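(* In the Setting, under (SA1)–(SA3), let $\mathcal I\in\mathfrak G$, distinct $i,j\in\mathcal I$ and pairwise distinct $\alpha_1,\alpha_2,\alpha_3\in\mathcal I^{\mathtt C}$. If $Y^{ij}_{\alpha_1\alpha_2}$ and $Y^{ij}_{\alpha_1\alpha_3}$ (basis $\mathcal I$) are radical while $Y^{ij}_{\alpha_2\alpha_3}\in\mathbb F$, then $Y^{ij}_{\alpha_2\alpha_3}\in\mathbb C$, and for both $w\in\{2,3\}$ the triple $\big(h(\mathcal I)h(\mathcal I^{ij}_{\alpha_1\alpha_w}),\,h(\mathcal I^i_{\alpha_1})h(\mathcal I^j_{\alpha_w}),\,h(\mathcal I^i_{\alpha_w})h(\mathcal I^j_{\alpha_1})\big)$ contains two entries in different positions that are proportional over $\mathbb C$ but not equal.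
   Context: Setting. $d\ge1$, $1\le k\le n$; $\mathbf t=(t_1,\dots,t_d)$ indeterminates; $\Lambda:=\mathbb C[t_1^{\pm1},\dots,t_d^{\pm1}]$ (a UFD whose units are exactly the elements $c\,\mathbf t^{\mathbf e}$, $c\in\mathbb C\setminus\{0\}$, $\mathbf e\in\mathbb Z^d$), $\mathbb F$ its fraction field, $\overline{\mathbb F}$ an algebraic closure. $[n]=\{1,\dots,n\}$, $\wp_k[n]$ the $k$-subsets. For $\mathcal I\in\wp_k[n]$: $\mathcal I^{\mathtt C}=[n]\setminus\mathcal I$; $\mathcal I^i_\alpha=(\mathcal I\setminus\{i\})\cup\{\alpha\}$; $\mathcal I^{ij}_{\alpha\beta}=(\mathcal I\setminus\{i,j\})\cup\{\alpha,\beta\}$. $\mathbf L$ ($k\times n$), $\mathbf R$ ($n\times k$) with entries in $\overline{\mathbb F}$; $\Delta_{\mathbf L}(\mathcal I)$, $\Delta_{\mathbf R}(\mathcal I)$ maximal minors on columns, resp. rows, $\mathcal I$; $h(\mathcal I):=\Delta_{\mathbf L}(\mathcal I)\Delta_{\mathbf R}(\mathcal I)$; $\mathfrak G:=\{\mathcal I:\Delta_{\mathbf L}(\mathcal I)\ne0\}$. (SA1) all $\Delta_{\mathbf R}(\mathcal I)\ne0$; (SA2) $h(\mathcal I)$ is a unit of $\Lambda$ for $\mathcal I\in\mathfrak G$; (SA3) $\mathbf L$ has no zero column. $Y^{ij}_{\alpha\beta}=Y(\mathcal I)^{ij}_{\alpha\beta}:=-\mathrm{sign}[(i-\alpha)(i-\beta)(j-\alpha)(j-\beta)]\frac{\Delta_{\mathbf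 R}(\mathcal I^i_\alpha)\Delta_{\mathbf R}(\mathcal I^j_\beta)}{\Delta_{\mathbf R}(\mathcal I^i_\beta)\Delta_{\mathbf R}(\mathcal I^j_\alpha)}$; it is radical if $h(\mathcal I)h(\mathcal I^{ij}_{\alpha\beta}),h(\mathcal I^i_\alpha)h(\mathcal I^j_\beta),h(\mathcal I^i_\beta)h(\mathcal I^j_\alpha)$ are all nonzero and $Y^{ij}_{\alpha\beta}\notin\mathbb F$. *)

theory Defs
  imports "HOL-Library.Poly_Mapping"
          "HOL-Computational_Algebra.Fraction_Field"
          "HOL-Algebra.Algebraic_Closure_Type"
          "Jordan_Normal_Form.Determinant"
          "Jordan_Normal_Form.DL_Submatrix"
begin

text \<open>Laurent polynomial ring Lambda = C[t_1^{+-1},...,t_d^{+-1}] realised as the group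
  algebra of Z^d: finitely supported maps from exponent vectors ('d =>0 int) to complex,
  with convolution product. The number of variables is d = CARD('d).\<close>
type_synonym 'd laurent = "('d \<Rightarrow>\<^sub>0 int) \<Rightarrow>\<^sub>0 complex"

type_synonym 'd fbar = "'d laurent fract alg_closure"

definition embF :: "'d::{finite,linorder} laurent fract \<Rightarrow> 'd fbar" where
  "embF x = to_ac x"

definition embL :: "'d::{finite,linorder} laurent \<Rightarrow> 'd fbar" where
  "embL u = embF (Fract u 1)"

definition embC :: "complex \<Rightarrow> 'd::{finite,linorder} fbar" where
  "embC c = embL (Poly_Mapping.single 0 c)"

definition inF :: "'d::{finite,linorder} fbar \<Rightarrow> bool" where
  "inF x \<longleftrightarrow> x \<in> range embF"

definition inC :: "'d::{finite,linorder} fbar \<Rightarrow> bool" where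
  "inC x \<longleftrightarrow> x \<in> range (embC :: complex \<Rightarrow> 'd fbar)"

definition is_Lunit :: "'d::{finite,linorder} fbar \<Rightarrow> bool" where
  "is_Lunit x \<longleftrightarrow> (\<exists>u :: 'd laurent. u dvd 1 \<and> x = embL u)"

text \<open>k-subsets of [n]; [n] is represented 0-based as {0..<n}.\<close>
definition ksubsets :: "nat \<Rightarrow> nat \<Rightarrow> nat set set" where
  "ksubsets k n = {I. I \<subseteq> {0..<n} \<and> card I = k}"

text \<open>Maximal minors: columns (resp. rows) I, taken in increasing order.\<close>
definition DeltaL :: "'a::comm_ring_1 mat \<Rightarrow> nat set \<Rightarrow> 'a" where
  "DeltaL L I = det (submatrix L UNIV I)"

definition DeltaR :: "'a::comm_ring_1 mat \<Rightarrow> nat set \<Rightarrow> 'a" where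
  "DeltaR R I = det (submatrix R I UNIV)"

definition hfun :: "'a::comm_ring_1 mat \<Rightarrow> 'a mat \<Rightarrow> nat set \<Rightarrow> 'a" where
  "hfun L R I = DeltaL L I * DeltaR R I"

definition swap1 :: "nat set \<Rightarrow> nat \<Rightarrow> nat \<Rightarrow> nat set" where
  "swap1 I i a = insert a (I - {i})"

definition swap2 :: "nat set \<Rightarrow> nat \<Rightarrow> nat \<Rightarrow> nat \<Rightarrow> nat \<Rightarrow> nat set" where
  "swap2 I i j a b = insert a (insert b (I - {i, j}))"

definition Yval :: "'a::field mat \<Rightarrow> nat set \<Rightarrow> nat \<Rightarrow> nat \<Rightarrow> nat \<Rightarrow> nat \<Rightarrow> 'a" where
  "Yval R I i j a b =
     - of_int (sgn ((int i - int a) * (int i - int b) * (int j - int a) * (int j - int b)))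
     * (DeltaR R (swap1 I i a) * DeltaR R (swap1 I j b))
       / (DeltaR R (swap1 I i b) * DeltaR R (swap1 I j a))"

definition radical :: "'d::{finite,linorder} fbar mat \<Rightarrow> 'd fbar mat \<Rightarrow> nat set
    \<Rightarrow> nat \<Rightarrow> nat \<Rightarrow> nat \<Rightarrow> nat \<Rightarrow> bool" where
  "radical L R I i j a b \<longleftrightarrow>
     hfun L R I * hfun L R (swap2 I i j a b) \<noteq> 0 \<and>
     hfun L R (swap1 I i a) * hfun L R (swap1 I j b) \<noteq> 0 \<and>
     hfun L R (swap1 I i b) * hfun L R (swap1 I j a) \<noteq> 0 \<and>
     \<not> inF (Yval R I i j a b)"

definition htriple :: "'a::comm_ring_1 mat \<Rightarrow> 'a mat \<Rightarrow> nat set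
    \<Rightarrow> nat \<Rightarrow> nat \<Rightarrow> nat \<Rightarrow> nat \<Rightarrow> 'a list" where
  "htriple L R I i j a b =
     [hfun L R I * hfun L R (swap2 I i j a b),
      hfun L R (swap1 I i a) * hfun L R (swap1 I j b),
      hfun L R (swap1 I i b) * hfun L R (swap1 I j a)]"

definition propC :: "'d::{finite,linorder} fbar \<Rightarrow> 'd fbar \<Rightarrow> bool" where
  "propC x y \<longleftrightarrow> (\<exists>c::complex. c \<noteq> 0 \<and> x = embC c * y)"

end

theory Submission
  imports Defs
begin

text \<open>Let \<open>Y\<^sup>R\<close> and \<open>Y\<^sup>L\<close> be the exchange ratios of \<open>R\<close> and of the transpose of \<open>L\<close>, and
  \<open>(A, B, C)\<close> the triple of a pair \<open>(\<alpha>, \<beta>)\<close>. The three-term Pluecker relation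
  \<open>1 + Y = \<plusminus>\<Delta>(I)\<Delta>(I\<^sup>i\<^sup>j\<^sub>\<alpha>\<^sub>\<beta>) / (\<Delta>(I\<^sup>j\<^sub>\<alpha>)\<Delta>(I\<^sup>i\<^sub>\<beta>))\<close> for both matrices gives
  \<open>Y\<^sup>R Y\<^sup>L = B/C\<close> and \<open>Y\<^sup>R + Y\<^sup>L = (A - B - C)/C\<close>, and by (SA2) the entries of the triples are
  Laurent monomials. As \<open>Y\<^sub>1\<^sub>3 = -Y\<^sub>1\<^sub>2 Y\<^sub>2\<^sub>3\<close> for both matrices, \<open>Y\<^sup>R\<^sub>2\<^sub>3 \<in> F\<close> forces
  \<open>Y\<^sup>R\<^sub>2\<^sub>3 = Y\<^sup>L\<^sub>2\<^sub>3\<close> (otherwise \<open>Y\<^sup>R\<^sub>1\<^sub>2 \<in> F\<close>). Then \<open>(A - B - C)\<^sup>2 = 4BC\<close> for the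
  monomials of \<open>(\<alpha>\<^sub>2, \<alpha>\<^sub>3)\<close>, which makes \<open>Y\<^sub>2\<^sub>3\<close> a constant \<open>-c\<close> with \<open>c \<noteq> 0, 1\<close>.
  Now \<open>Y\<^sub>1\<^sub>3 = c Y\<^sub>1\<^sub>2\<close> for both matrices yields a linear relation between the monomials of the
  two triples, which is impossible unless two entries of a triple share their exponent but not their
  coefficient.\<close>

section \<open>Maximal minors as determinants of ordered rows\<close>

definition row_minor :: "nat \<Rightarrow> 'a::comm_ring_1 mat \<Rightarrow> nat list \<Rightarrow> 'a" where
  "row_minor k M xs = det (mat k k (\<lambda>(p, q). M $$ (xs ! p, q)))"

lemma pick_eq_sorted_list_of_set:
  assumes "finite A" and "p < card A"
  shows "pick A p = sorted_list_of_set A ! p"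
proof -
  define xs where "xs = sorted_list_of_set A"
  have len: "length xs = card A" and sorted: "sorted_wrt (<) xs" and dist: "distinct xs"
    and set_xs: "set xs = A"
    using assms(1) by (simp_all add: xs_def strict_sorted_list_of_set)
  have mem: "xs ! p \<in> A" using assms(2) len set_xs nth_mem by metis
  have below: "{a \<in> A. a < xs ! p} = (\<lambda>q. xs ! q) ` {..<p}"
  proof (intro equalityI subsetI)
    fix a assume a: "a \<in> {a \<in> A. a < xs ! p}"
    then obtain q where q: "q < length xs" "a = xs ! q" using set_xs by (auto simp: in_set_conv_nth)
    have "\<not> p \<le> q"
      using sorted_wrt_nth_less[OF sorted, of p q] q a by (auto simp: le_less)
    then show "a \<in> (\<lambda>q. xs ! q) ` {..<p}" using q by auto
  next
    fix a assume "a \<in> (\<lambda>q. xs ! q) ` {..<p}"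
    then obtain q where "q < p" "a = xs ! q" by auto
    then show "a \<in> {a \<in> A. a < xs ! p}"
      using sorted_wrt_nth_less[OF sorted, of q p] assms(2) len set_xs nth_mem
      by (metis (mono_tags, lifting) mem_Collect_eq order.strict_trans)
  qed
  have "inj_on (\<lambda>q. xs ! q) {..<p}"
    using dist assms(2) len by (auto simp: inj_on_def nth_eq_iff_index_eq)
  then have "card {a \<in> A. a < xs ! p} = p" unfolding below by (simp add: card_image)
  then show ?thesis using pick_card_in_set[OF mem] unfolding xs_def by simp
qed

lemma DeltaR_eq_row_minor:
  assumes M: "M \<in> carrier_mat n k" and A: "A \<subseteq> {0..<n}" "card A = k"
  shows "DeltaR M A = row_minor k M (sorted_list_of_set A)"
proof -
  have fin: "finite A" using A finite_subset by auto
  have rows: "{i. i < dim_row M \<and> i \<in> A} = A" and cols: "{j. j < dim_col M \<and> j \<in> UNIV} = {0..<k}"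
    using M A by auto
  show ?thesis unfolding DeltaR_def row_minor_def submatrix_def rows cols
    by (rule arg_cong[where f = det], rule eq_matI) (auto simp: A pick_UNIV pick_eq_sorted_list_of_set fin)
qed

lemma row_minor_swap_adjacent:
  assumes "length pre + length post + 2 = k"
  shows "row_minor k M (pre @ u # v # post) = - row_minor k M (pre @ v # u # post)"
proof -
  let ?p = "length pre" and ?A = "mat k k (\<lambda>(p, q). M $$ ((pre @ v # u # post) ! p, q))"
  have "swaprows ?p (Suc ?p) ?A = mat k k (\<lambda>(p, q). M $$ ((pre @ u # v # post) ! p, q))"
    by (rule eq_matI) (use assms in \<open>auto simp: nth_append nth_Cons'\<close>)
  then show ?thesis
    unfolding row_minor_def using det_swaprows[of ?p k "Suc ?p" ?A] assms by simp
qed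

lemma insort_append_single_ge: "(y::'a::linorder) \<le> a \<Longrightarrow> insort y (xs @ [a]) = insort y xs @ [a]"
  by (induction xs) auto

lemma insort_greater: "\<forall>z\<in>set xs. z < (y::'a::linorder) \<Longrightarrow> insort y xs = xs @ [y]"
  by (induction xs) auto

lemma row_minor_insort:
  fixes y :: nat
  assumes "sorted xs" "distinct xs" "y \<notin> set xs" "length pre + length xs + length post + 1 = k"
  shows "row_minor k M (pre @ insort y xs @ post) =
    (-1) ^ card {s \<in> set xs. y < s} * row_minor k M (pre @ xs @ y # post)"
  using assms
proof (induction xs arbitrary: post rule: rev_induct)
  case Nil
  then show ?case by simp
next
  case (snoc a xs)
  have sorted: "sorted xs" "\<forall>z\<in>set xs. z \<le> a" using snoc.prems(1) by (simp_all add: sorted_append)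
  have dist: "distinct xs" "a \<notin> set xs" using snoc.prems(2) by auto
  show ?case
  proof (cases "a < y")
    case True
    then have "\<forall>z\<in>set (xs @ [a]). z < y" using sorted by auto
    then have "insort y (xs @ [a]) = (xs @ [a]) @ [y]" and "{s \<in> set (xs @ [a]). y < s} = {}"
      by (auto simp: insort_greater)
    then show ?thesis by (simp only: card.empty power_0 mult_1_left append_assoc) simp
  next
    case False
    then have "y < a" using snoc.prems(3) by simp
    have IH: "row_minor k M (pre @ insort y xs @ a # post) =
        (-1) ^ card {s \<in> set xs. y < s} * row_minor k M (pre @ xs @ y # a # post)"
      using snoc.IH[of "a # post"] sorted dist snoc.prems by auto
    have "row_minor k M ((pre @ xs) @ y # a # post) = - row_minor k M ((pre @ xs) @ a # y # post)"
      by (rule row_minor_swap_adjacent) (use snoc.prems(4) in simp)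
    moreover have "{s \<in> set (xs @ [a]). y < s} = insert a {s \<in> set xs. y < s}" using \<open>y < a\<close> by auto
    ultimately show ?thesis
      using IH dist \<open>y < a\<close> by (simp add: insort_append_single_ge)
  qed
qed

definition insertion_sign :: "nat set \<Rightarrow> nat \<Rightarrow> 'a::comm_ring_1" where
  "insertion_sign S x = (-1) ^ card {s \<in> S. x < s}"

definition order_sign :: "nat \<Rightarrow> nat \<Rightarrow> 'a::comm_ring_1" where
  "order_sign x y = (if x < y then 1 else -1)"

lemma order_sign_square [simp]: "order_sign x y * order_sign x y = (1::'a::comm_ring_1)"
  by (simp add: order_sign_def)

lemma row_minor_sorted_insert2:
  assumes fin: "finite S" and xy: "x \<noteq> y" "x \<notin> S" "y \<notin> S" and k: "card S + 2 = k"
  shows "row_minor k M (sorted_list_of_set (insert x (insert y S))) =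
    insertion_sign S x * insertion_sign S y * order_sign x y * row_minor k M (sorted_list_of_set S @ [x, y])"
proof -
  define xs where "xs = sorted_list_of_set S"
  have xs: "sorted xs" "distinct xs" "set xs = S" "length xs = card S"
    unfolding xs_def using fin by auto
  have "sorted_list_of_set (insert x (insert y S)) = insort x (insort y xs)"
    unfolding xs_def using fin xy by (simp add: sorted_list_of_set_insert)
  moreover have "row_minor k M ([] @ insort x (insort y xs) @ []) =
      (-1) ^ card {s \<in> set (insort y xs). x < s} * row_minor k M ([] @ insort y xs @ [x])"
    by (rule row_minor_insort) (use xs xy k in \<open>auto simp: sorted_insort distinct_insort set_insort_key\<close>)
  moreover have "row_minor k M ([] @ insort y xs @ [x]) =
      (-1) ^ card {s \<in> set xs. y < s} * row_minor k M ([] @ xs @ y # [x])"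
    by (rule row_minor_insort) (use xs xy k in auto)
  moreover have "row_minor k M (xs @ [y, x]) = - row_minor k M (xs @ [x, y])"
    using row_minor_swap_adjacent[of xs "[]" k M y x] xs k by simp
  moreover have "{s \<in> set (insort y xs). x < s} = (if x < y then insert y {s \<in> S. x < s} else {s \<in> S. x < s})"
    using xs by (auto simp: set_insort_key)
  ultimately show ?thesis
    using fin xy xs(3) by (auto simp: insertion_sign_def order_sign_def xs_def)
qed

section \<open>The three-term Pluecker relation\<close>

definition det_extended :: "nat \<Rightarrow> (nat \<Rightarrow> nat \<Rightarrow> 'a::comm_ring_1) \<Rightarrow> (nat \<Rightarrow> 'a) \<Rightarrow> (nat \<Rightarrow> 'a) \<Rightarrow> 'a" where
  "det_extended m G u v =
     det (mat (m + 2) (m + 2) (\<lambda>(p, q). if p < m then G p q else if p = m then u q else v q))"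

lemma det_extended_cong:
  assumes "\<forall>q < m + 2. u q = u' q" "\<forall>q < m + 2. v q = v' q"
  shows "det_extended m G u v = det_extended m G u' v'"
  unfolding det_extended_def by (rule arg_cong[where f = det], rule eq_matI) (use assms in auto)

lemma det_extended_swap: "det_extended m G v u = - det_extended m G u v"
proof -
  let ?A = "mat (m + 2) (m + 2) (\<lambda>(p, q). if p < m then G p q else if p = m then u q else v q)"
  have "swaprows m (m + 1) ?A =
      mat (m + 2) (m + 2) (\<lambda>(p, q). if p < m then G p q else if p = m then v q else u q)"
    by (rule eq_matI) auto
  then show ?thesis unfolding det_extended_def using det_swaprows[of m "m + 2" "m + 1" ?A] by simp
qed

lemma det_extended_same: "det_extended m G u u = 0"
proof -
  let ?A = "mat (m + 2) (m + 2) (\<lambda>(p, q). if p < m then G p q else if p = m then u q else u q)"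
  have "row ?A m = row ?A (m + 1)" by (rule eq_vecI) auto
  then show ?thesis unfolding det_extended_def by (intro det_identical_rows[of ?A "m + 2" m "m + 1"]) auto
qed

lemma det_extended_row_of_G: assumes "p < m" shows "det_extended m G (G p) v = 0"
proof -
  let ?A = "mat (m + 2) (m + 2) (\<lambda>(p', q). if p' < m then G p' q else if p' = m then G p q else v q)"
  have "row ?A p = row ?A m" by (rule eq_vecI) (use assms in auto)
  then show ?thesis unfolding det_extended_def by (intro det_identical_rows[of ?A "m + 2" p m]) (use assms in auto)
qed

lemma det_row_linear_sum:
  fixes c :: "'i \<Rightarrow> 'a::comm_ring_1"
  assumes r: "r < n" and P: "finite P"
  shows "det (mat n n (\<lambda>(i, j). if i = r then (\<Sum>p\<in>P. c p * w p j) else B i j))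
       = (\<Sum>p\<in>P. c p * det (mat n n (\<lambda>(i, j). if i = r then w p j else B i j)))"
proof -
  let ?U = "{0..<n}"
  let ?rest = "\<lambda>\<pi>. \<Prod>i\<in>?U - {r}. B i (\<pi> i)"
  have expand: "det (mat n n (\<lambda>(i, j). if i = r then f j else B i j)) =
      (\<Sum>\<pi>\<in>{\<pi>. \<pi> permutes ?U}. signof \<pi> * (f (\<pi> r) * ?rest \<pi>))" for f
  proof (unfold det_def'[OF mat_carrier], rule sum.cong[OF refl])
    fix \<pi> assume "\<pi> \<in> {\<pi>. \<pi> permutes ?U}"
    then have \<pi>: "\<pi> permutes ?U" by simp
    have "(\<Prod>i\<in>?U. mat n n (\<lambda>(i, j). if i = r then f j else B i j) $$ (i, \<pi> i))
        = (\<Prod>i\<in>?U. if i = r then f (\<pi> r) else B i (\<pi> i))"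
      by (rule prod.cong) (use permutes_in_image[OF \<pi>] in auto)
    also have "\<dots> = f (\<pi> r) * ?rest \<pi>"
      by (subst prod.remove[of _ r]) (use r in \<open>auto intro!: prod.cong\<close>)
    finally show "signof \<pi> * (\<Prod>i\<in>?U. mat n n (\<lambda>(i, j). if i = r then f j else B i j) $$ (i, \<pi> i))
        = signof \<pi> * (f (\<pi> r) * ?rest \<pi>)" by simp
  qed
  show ?thesis
    unfolding expand sum_distrib_left
    by (subst sum.swap) (auto intro!: sum.cong simp: sum_distrib_left sum_distrib_right mult_ac)
qed

lemma det_extended_linear:
  fixes G :: "nat \<Rightarrow> nat \<Rightarrow> 'a::comm_ring_1"
  assumes "finite P"
  shows "det_extended m G (\<lambda>q. \<Sum>p\<in>P. c p * w p q) v = (\<Sum>p\<in>P. c p * det_extended m G (w p) v)"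
proof -
  have "(\<lambda>(p, q). if p < m then G p q else if p = m then U q else v q) =
      (\<lambda>(i, j). if i = m then U j else if i < m then G i j else v j)" for U :: "nat \<Rightarrow> 'a"
    by (auto simp: fun_eq_iff)
  then show ?thesis unfolding det_extended_def by (simp add: det_row_linear_sum assms)
qed

definition extended_rows :: "nat \<Rightarrow> (nat \<Rightarrow> nat \<Rightarrow> 'a) \<Rightarrow> (nat \<Rightarrow> 'a) \<Rightarrow> (nat \<Rightarrow> 'a) \<Rightarrow> nat \<Rightarrow> nat \<Rightarrow> 'a" where
  "extended_rows m G u v p = (if p < m then G p else if p = m then u else v)"

lemma det_extended_rows_span:
  fixes G :: "nat \<Rightarrow> nat \<Rightarrow> 'a::field"
  assumes "det_extended m G u v \<noteq> 0"
  shows "\<exists>c. \<forall>q < m + 2. w q = (\<Sum>p < m + 2. c p * extended_rows m G u v p q)"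
proof -
  let ?n = "m + 2"
  define T where "T = transpose_mat (mat ?n ?n (\<lambda>(p, q). extended_rows m G u v p q))"
  have T: "T \<in> carrier_mat ?n ?n" unfolding T_def by simp
  have "det T = det_extended m G u v"
    unfolding T_def det_transpose[OF mat_carrier] det_extended_def
    by (rule arg_cong[where f = det], rule eq_matI) (auto simp: extended_rows_def)
  then obtain B where B: "B \<in> carrier_mat ?n ?n" "T * B = 1\<^sub>m ?n"
    using det_non_zero_imp_unit[OF T, of "()"] assms unfolding Units_def ring_mat_def by auto
  define cv where "cv = B *\<^sub>v vec ?n w"
  have cv: "cv \<in> carrier_vec ?n" unfolding cv_def using B by simp
  have Tc: "T *\<^sub>v cv = vec ?n w"
    unfolding cv_def using B T by (simp flip: assoc_mult_mat_vec)
  show ?thesis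
  proof (intro exI allI impI)
    fix q assume q: "q < ?n"
    have "w q = (T *\<^sub>v cv) $ q" using Tc q by simp
    also have "\<dots> = (\<Sum>p<?n. cv $ p * extended_rows m G u v p q)"
      using q T cv by (auto simp: T_def scalar_prod_def mult.commute lessThan_atLeast0 intro!: sum.cong)
    finally show "w q = (\<Sum>p<?n. cv $ p * extended_rows m G u v p q)" .
  qed
qed

lemma det_extended_combination:
  "det_extended m G (\<lambda>q. \<Sum>p < m + 2. c p * extended_rows m G u v p q) y
     = c m * det_extended m G u y + c (m + 1) * det_extended m G v y"
proof -
  have "{..<m + 2} = insert (m + 1) (insert m {..<m})" by auto
  moreover have "(\<Sum>p<m. c p * det_extended m G (extended_rows m G u v p) y) = 0"
    by (rule sum.neutral) (auto simp: extended_rows_def det_extended_row_of_G)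
  ultimately show ?thesis by (subst det_extended_linear) (simp_all add: extended_rows_def)
qed

text \<open>The rows of \<open>G\<close> together with \<open>u, v\<close> form a basis; expand \<open>w, z\<close> in it.\<close>

lemma det_extended_plucker_if_nonzero:
  fixes G :: "nat \<Rightarrow> nat \<Rightarrow> 'a::field"
  assumes "det_extended m G u v \<noteq> 0"
  shows "det_extended m G u v * det_extended m G w z - det_extended m G u w * det_extended m G v z
       + det_extended m G u z * det_extended m G v w = 0"
proof -
  let ?d = "det_extended m G"
  have expand: "\<exists>a b. \<forall>y. ?d x y = a * ?d u y + b * ?d v y" for x
  proof -
    obtain c where "\<forall>q < m + 2. x q = (\<Sum>p < m + 2. c p * extended_rows m G u v p q)"
      using det_extended_rows_span[OF assms] by blast
    then have "?d x y = c m * ?d u y + c (m + 1) * ?d v y" for y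
      by (subst det_extended_combination[symmetric]) (rule det_extended_cong, auto)
    then show ?thesis by blast
  qed
  obtain a b where w: "\<forall>y. ?d w y = a * ?d u y + b * ?d v y" using expand by blast
  obtain a' b' where z: "\<forall>y. ?d z y = a' * ?d u y + b' * ?d v y" using expand by blast
  have "?d w u = - b * ?d u v" "?d w v = a * ?d u v" "?d z u = - b' * ?d u v" "?d z v = a' * ?d u v"
    using w z det_extended_same[of m G u] det_extended_same[of m G v] det_extended_swap[of m G u v] by auto
  then have uw: "?d u w = b * ?d u v" and vw: "?d v w = - a * ?d u v"
    and uz: "?d u z = b' * ?d u v" and vz: "?d v z = - a' * ?d u v"
    using det_extended_swap[of m G u w] det_extended_swap[of m G v w] det_extended_swap[of m G u z]
      det_extended_swap[of m G v z] by auto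
  have "?d w z = a * ?d u z + b * ?d v z" using w by simp
  also have "\<dots> = (a * b' - b * a') * ?d u v" unfolding uz vz by (simp add: algebra_simps)
  finally have wz: "?d w z = (a * b' - b * a') * ?d u v" .
  show ?thesis unfolding uw vw uz vz wz by (simp add: algebra_simps)
qed

lemma det_extended_plucker:
  fixes G :: "nat \<Rightarrow> nat \<Rightarrow> 'a::field"
  shows "det_extended m G u v * det_extended m G w z - det_extended m G u w * det_extended m G v z
       + det_extended m G u z * det_extended m G v w = 0"
proof -
  define P where "P u v w z = det_extended m G u v * det_extended m G w z
    - det_extended m G u w * det_extended m G v z + det_extended m G u z * det_extended m G v w" for u v w z
  have swap_23: "P u w v z = - P u v w z" and swap_34: "P u v z w = - P u v w z" for u v w z
    unfolding P_def
    by (simp_all add: det_extended_swap[of m G v w] det_extended_swap[of m G w z] algebra_simps)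
  have nz: "det_extended m G u v \<noteq> 0 \<Longrightarrow> P u v w z = 0" for u v w z
    unfolding P_def by (rule det_extended_plucker_if_nonzero)
  consider "det_extended m G u v \<noteq> 0" | "det_extended m G u w \<noteq> 0" | "det_extended m G u z \<noteq> 0"
    | "det_extended m G u v = 0" "det_extended m G u w = 0" "det_extended m G u z = 0"
    by blast
  then have "P u v w z = 0"
  proof cases
    case 1
    then show ?thesis by (rule nz)
  next
    case 2
    then show ?thesis using nz[of u w v z] swap_23[of u v w z] by simp
  next
    case 3
    then show ?thesis using nz[of u z v w] swap_23[of u v z w] swap_34[of u v w z] by simp
  qed (simp add: P_def)
  then show ?thesis by (simp add: P_def)
qed

lemma row_minor_append2:
  assumes "length xs = m"
  shows "row_minor (m + 2) M (xs @ [x, y]) =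
    det_extended m (\<lambda>p q. M $$ (xs ! p, q)) (\<lambda>q. M $$ (x, q)) (\<lambda>q. M $$ (y, q))"
  unfolding row_minor_def det_extended_def
  by (rule arg_cong[where f = det], rule eq_matI) (auto simp: nth_append assms)

lemma DeltaR_insert2:
  fixes M :: "'a::comm_ring_1 mat"
  assumes M: "M \<in> carrier_mat n k" and S: "S \<subseteq> {0..<n}" "card S + 2 = k"
    and xy: "x \<noteq> y" "x \<notin> S" "y \<notin> S" "x < n" "y < n"
  shows "DeltaR M (insert x (insert y S)) = insertion_sign S x * insertion_sign S y * order_sign x y *
    det_extended (card S) (\<lambda>p q. M $$ (sorted_list_of_set S ! p, q)) (\<lambda>q. M $$ (x, q)) (\<lambda>q. M $$ (y, q))"
proof -
  have fin: "finite S" using S finite_subset by blast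
  have "DeltaR M (insert x (insert y S)) = row_minor k M (sorted_list_of_set (insert x (insert y S)))"
    by (rule DeltaR_eq_row_minor[OF M]) (use fin xy S in auto)
  also have "\<dots> = insertion_sign S x * insertion_sign S y * order_sign x y *
      row_minor k M (sorted_list_of_set S @ [x, y])"
    by (rule row_minor_sorted_insert2) (use fin xy S in auto)
  finally show ?thesis using row_minor_append2[of "sorted_list_of_set S" "card S" M x y] S fin by simp
qed

lemma sign_factors_cancel:
  fixes e e' t1 t2 t3 t4 p p' :: "'a::comm_ring_1"
  assumes "e * e = 1" "e' * e' = 1"
  shows "e * e' * ((t1 * t2 * e * p) * (t3 * t4 * e' * p')) = t1 * t2 * t3 * t4 * (p * p')"
proof -
  have "e * e' * ((t1 * t2 * e * p) * (t3 * t4 * e' * p')) = (e * e) * (e' * e') * (t1 * t2 * t3 * t4 * (p * p'))"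
    by (simp add: mult_ac)
  then show ?thesis using assms by simp
qed

lemma plucker_relation_DeltaR:
  fixes M :: "'a::field mat"
  assumes M: "M \<in> carrier_mat n k" and S: "S \<subseteq> {0..<n}" "card S + 2 = k"
    and out: "i \<notin> S" "j \<notin> S" "a \<notin> S" "b \<notin> S" and lt: "i < n" "j < n" "a < n" "b < n"
    and dist: "i \<noteq> j" "a \<noteq> b" "i \<noteq> a" "i \<noteq> b" "j \<noteq> a" "j \<noteq> b"
  shows "order_sign i j * order_sign a b * (DeltaR M (insert i (insert j S)) * DeltaR M (insert a (insert b S)))
    - order_sign i a * order_sign j b * (DeltaR M (insert i (insert a S)) * DeltaR M (insert j (insert b S)))
    + order_sign i b * order_sign j a * (DeltaR M (insert i (insert b S)) * DeltaR M (insert j (insert a S)))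
    = 0"
proof -
  define t where "t x = (insertion_sign S x :: 'a)" for x
  define ph where "ph x y = det_extended (card S) (\<lambda>p q. M $$ (sorted_list_of_set S ! p, q))
    (\<lambda>q. M $$ (x, q)) (\<lambda>q. M $$ (y, q))" for x y
  have D: "DeltaR M (insert x (insert y S)) = t x * t y * order_sign x y * ph x y"
    if "x \<noteq> y" "x \<notin> S" "y \<notin> S" "x < n" "y < n" for x y
    unfolding t_def ph_def by (rule DeltaR_insert2[OF M S that])
  have sign_free: "order_sign x y * order_sign x' y' *
      (DeltaR M (insert x (insert y S)) * DeltaR M (insert x' (insert y' S)))
      = t x * t y * t x' * t y' * (ph x y * ph x' y')"
    if "x \<noteq> y" "x \<notin> S" "y \<notin> S" "x < n" "y < n" "x' \<noteq> y'" "x' \<notin> S" "y' \<notin> S" "x' < n" "y' < n"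
    for x y x' y'
    unfolding D[OF that(1-5)] D[OF that(6-10)] by (rule sign_factors_cancel) simp_all
  have "ph i j * ph a b - ph i a * ph j b + ph i b * ph j a = 0"
    unfolding ph_def by (rule det_extended_plucker)
  moreover have "?thesis \<longleftrightarrow> t i * t j * t a * t b * (ph i j * ph a b - ph i a * ph j b + ph i b * ph j a) = 0"
    unfolding sign_free[OF dist(1) out(1,2) lt(1,2) dist(2) out(3,4) lt(3,4)]
      sign_free[OF dist(3) out(1,3) lt(1,3) dist(6) out(2,4) lt(2,4)]
      sign_free[OF dist(4) out(1,4) lt(1,4) dist(5) out(2,3) lt(2,3)]
    by (simp add: algebra_simps)
  ultimately show ?thesis by simp
qed

section \<open>The exchange ratios Y\<close>

definition exchange_sign :: "nat \<Rightarrow> nat \<Rightarrow> nat \<Rightarrow> nat \<Rightarrow> 'a::comm_ring_1" where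
  "exchange_sign i j a b = order_sign i j * order_sign a b * order_sign i a * order_sign j b"

lemma exchange_sign_square [simp]: "exchange_sign i j a b * exchange_sign i j a b = (1::'a::comm_ring_1)"
proof -
  have "exchange_sign i j a b * exchange_sign i j a b = (order_sign i j * order_sign i j) *
      (order_sign a b * order_sign a b) * (order_sign i a * order_sign i a) * (order_sign j b * order_sign j b :: 'a)"
    by (simp add: exchange_sign_def mult_ac)
  then show ?thesis by simp
qed

lemma Yval_sign_eq:
  assumes "a \<noteq> i" "a \<noteq> j" "b \<noteq> i" "b \<noteq> j"
  shows "(of_int (sgn ((int i - int a) * (int i - int b) * (int j - int a) * (int j - int b))) :: 'a::comm_ring_1)
    = order_sign i a * order_sign i b * order_sign j a * order_sign j b"
proof -
  have "(of_int (sgn (int x - int y)) :: 'a) = - order_sign x y" if "y \<noteq> x" for x y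
    using that by (auto simp: order_sign_def sgn_if)
  then show ?thesis using assms by (simp add: sgn_mult)
qed

lemma Yval_sign_square:
  assumes "a \<noteq> i" "a \<noteq> j" "b \<noteq> i" "b \<noteq> j"
  shows "(of_int (sgn ((int i - int a) * (int i - int b) * (int j - int a) * (int j - int b))) :: 'a::comm_ring_1)
    * of_int (sgn ((int i - int a) * (int i - int b) * (int j - int a) * (int j - int b))) = 1"
proof -
  have "(order_sign i a * order_sign i b * order_sign j a * order_sign j b) *
      (order_sign i a * order_sign i b * order_sign j a * order_sign j b) = (order_sign i a * order_sign i a) *
      (order_sign i b * order_sign i b) * (order_sign j a * order_sign j a) * (order_sign j b * order_sign j b :: 'a)"
    by (simp add: mult_ac)
  then show ?thesis by (simp add: Yval_sign_eq[OF assms])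
qed

lemma Yval_chain:
  fixes M :: "'a::field mat"
  assumes "DeltaR M (swap1 I i a) \<noteq> 0" "DeltaR M (swap1 I i b) \<noteq> 0" "DeltaR M (swap1 I i c) \<noteq> 0"
    "DeltaR M (swap1 I j a) \<noteq> 0" "DeltaR M (swap1 I j b) \<noteq> 0" "DeltaR M (swap1 I j c) \<noteq> 0"
    and "b \<noteq> i" "b \<noteq> j"
  shows "Yval M I i j a c = - (Yval M I i j a b * Yval M I i j b c)"
proof -
  define e where "e x = (of_int (sgn ((int i - int x) * (int j - int x))) :: 'a)" for x
  have e: "(of_int (sgn ((int i - int x) * (int i - int y) * (int j - int x) * (int j - int y))) :: 'a) = e x * e y"
    for x y unfolding e_def by (simp add: sgn_mult mult_ac)
  have "e b * e b = 1" unfolding e_def using assms(7,8) by (auto simp: sgn_mult sgn_if)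
  then show ?thesis unfolding Yval_def e using assms(1-6) by (simp add: field_simps)
qed

lemma Yval_nonzero:
  fixes M :: "'a::field mat"
  assumes "DeltaR M (swap1 I i a) \<noteq> 0" "DeltaR M (swap1 I j b) \<noteq> 0"
    "DeltaR M (swap1 I i b) \<noteq> 0" "DeltaR M (swap1 I j a) \<noteq> 0"
    and "a \<noteq> i" "a \<noteq> j" "b \<noteq> i" "b \<noteq> j"
  shows "Yval M I i j a b \<noteq> 0"
  using assms Yval_sign_square[OF assms(5-8), where 'a = 'a] by (auto simp: Yval_def)

lemma DeltaL_eq_DeltaR_transpose:
  assumes L: "L \<in> carrier_mat k n" and J: "J \<subseteq> {0..<n}" "card J = k"
  shows "DeltaL L J = DeltaR (transpose_mat L) J"
proof -
  have rows: "{i. i < n \<and> i \<in> J} = J" and cols: "{j. j < k \<and> j \<in> UNIV} = {0..<k}" using J by auto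
  have "submatrix L UNIV J = transpose_mat (submatrix (transpose_mat L) J UNIV)"
  proof (rule eq_matI)
    fix a b
    assume "a < dim_row (transpose_mat (submatrix (transpose_mat L) J UNIV))"
      "b < dim_col (transpose_mat (submatrix (transpose_mat L) J UNIV))"
    moreover from this have "pick J b \<in> J" using L J by (intro pick_in_set_le) (auto simp: submatrix_def rows)
    ultimately show "submatrix L UNIV J $$ (a, b) = transpose_mat (submatrix (transpose_mat L) J UNIV) $$ (a, b)"
      using L J by (auto simp: submatrix_def rows cols pick_UNIV)
  qed (use L J in \<open>auto simp: submatrix_def rows cols\<close>)
  moreover have "submatrix (transpose_mat L) J UNIV \<in> carrier_mat k k"
    using L J by (auto simp: submatrix_def rows cols)
  ultimately show ?thesis unfolding DeltaL_def DeltaR_def by (simp add: det_transpose)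
qed

locale basis_exchange =
  fixes k n :: nat and I :: "nat set" and i j :: nat
  assumes I: "I \<in> ksubsets k n" and ij: "i \<in> I" "j \<in> I" "i \<noteq> j"
begin

lemma finite_I: "finite I"
  using I finite_subset by (auto simp: ksubsets_def)

lemma swap1_ksubsets: "x \<in> I \<Longrightarrow> a \<in> {0..<n} - I \<Longrightarrow> swap1 I x a \<in> ksubsets k n"
  using I finite_I by (auto simp: ksubsets_def swap1_def card_Diff_singleton)
    (metis One_nat_def Suc_pred card_gt_0_iff empty_iff)

lemma swap2_ksubsets:
  assumes "a \<in> {0..<n} - I" "b \<in> {0..<n} - I" "a \<noteq> b"
  shows "swap2 I i j a b \<in> ksubsets k n"
proof -
  have "2 \<le> card I" using card_mono[OF finite_I, of "{i, j}"] ij by simp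
  moreover have "card (I - {i, j}) = card I - 2" using ij finite_I by (simp add: card_Diff_subset)
  ultimately show ?thesis using I ij assms finite_I by (auto simp: ksubsets_def swap2_def)
qed

lemma plucker_relation:
  fixes M :: "'a::field mat"
  assumes M: "M \<in> carrier_mat n k" and ab: "a \<in> {0..<n} - I" "b \<in> {0..<n} - I" "a \<noteq> b"
  shows "order_sign i j * order_sign a b * (DeltaR M I * DeltaR M (swap2 I i j a b)) =
    order_sign i a * order_sign j b * (DeltaR M (swap1 I j a) * DeltaR M (swap1 I i b))
    - order_sign i b * order_sign j a * (DeltaR M (swap1 I j b) * DeltaR M (swap1 I i a))"
proof -
  define S where "S = I - {i, j}"
  have "2 \<le> card I" using card_mono[OF finite_I, of "{i, j}"] ij by simp
  then have S: "S \<subseteq> {0..<n}" "card S + 2 = k"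
    using I ij finite_I by (auto simp: S_def ksubsets_def card_Diff_subset)
  have sets: "insert i (insert j S) = I" "insert a (insert b S) = swap2 I i j a b"
    "insert i (insert a S) = swap1 I j a" "insert j (insert b S) = swap1 I i b"
    "insert i (insert b S) = swap1 I j b" "insert j (insert a S) = swap1 I i a"
    using ij by (auto simp: S_def swap1_def swap2_def)
  have "i \<notin> S" "j \<notin> S" "a \<notin> S" "b \<notin> S" "i < n" "j < n" "a < n" "b < n"
    "i \<noteq> j" "a \<noteq> b" "i \<noteq> a" "i \<noteq> b" "j \<noteq> a" "j \<noteq> b"
    using I ij ab by (auto simp: S_def ksubsets_def)
  from plucker_relation_DeltaR[OF M S this] show ?thesis
    unfolding sets by (simp add: algebra_simps)
qed

lemma one_plus_Yval:
  fixes M :: "'a::field mat"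
  assumes M: "M \<in> carrier_mat n k" and ab: "a \<in> {0..<n} - I" "b \<in> {0..<n} - I" "a \<noteq> b"
    and nz: "DeltaR M (swap1 I j a) \<noteq> 0" "DeltaR M (swap1 I i b) \<noteq> 0"
  shows "1 + Yval M I i j a b = exchange_sign i j a b * DeltaR M I * DeltaR M (swap2 I i j a b)
    / (DeltaR M (swap1 I j a) * DeltaR M (swap1 I i b))"
proof -
  let ?D = "DeltaR M"
  have ne: "a \<noteq> i" "a \<noteq> j" "b \<noteq> i" "b \<noteq> j" using ab ij by auto
  let ?e = "order_sign i a * order_sign j b :: 'a"
  have "?e * ?e = (order_sign i a * order_sign i a) * (order_sign j b * order_sign j b :: 'a)"
    by (simp add: mult_ac)
  then have e: "?e * ?e = 1" by simp
  have "?e * (order_sign i j * order_sign a b * (?D I * ?D (swap2 I i j a b))) =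
      (?e * ?e) * (?D (swap1 I j a) * ?D (swap1 I i b))
      - ?e * (order_sign i b * order_sign j a) * (?D (swap1 I j b) * ?D (swap1 I i a))"
    unfolding plucker_relation[OF M ab] by (simp add: algebra_simps)
  then have "exchange_sign i j a b * ?D I * ?D (swap2 I i j a b) = ?D (swap1 I j a) * ?D (swap1 I i b)
      - order_sign i a * order_sign i b * order_sign j a * order_sign j b * (?D (swap1 I j b) * ?D (swap1 I i a))"
    unfolding e exchange_sign_def by (simp add: mult_ac)
  then show ?thesis
    using nz unfolding Yval_def Yval_sign_eq[OF ne] by (simp add: field_simps)
qed

lemma Yval_transpose_mult:
  fixes L R :: "'a::field mat"
  assumes L: "L \<in> carrier_mat k n" and ab: "a \<in> {0..<n} - I" "b \<in> {0..<n} - I" "a \<noteq> b"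
    and nz: "DeltaR R (swap1 I i b) \<noteq> 0" "DeltaR R (swap1 I j a) \<noteq> 0"
      "DeltaL L (swap1 I i b) \<noteq> 0" "DeltaL L (swap1 I j a) \<noteq> 0"
  shows "Yval R I i j a b * Yval (transpose_mat L) I i j a b =
    hfun L R (swap1 I i a) * hfun L R (swap1 I j b) / (hfun L R (swap1 I i b) * hfun L R (swap1 I j a))"
proof -
  have ne: "a \<noteq> i" "a \<noteq> j" "b \<noteq> i" "b \<noteq> j" using ab ij by auto
  have "DeltaL L (swap1 I x c) = DeltaR (transpose_mat L) (swap1 I x c)" if "x \<in> I" "c \<in> {0..<n} - I" for x c
    using swap1_ksubsets[OF that] by (intro DeltaL_eq_DeltaR_transpose[OF L]) (auto simp: ksubsets_def)
  then have DL: "DeltaL L (swap1 I x c) = DeltaR (transpose_mat L) (swap1 I x c)"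
    if "x \<in> {i, j}" "c \<in> {a, b}" for x c using that ij ab by auto
  show ?thesis
    using nz Yval_sign_square[OF ne, where 'a = 'a]
    unfolding Yval_def hfun_def by (simp add: DL field_simps)
qed

lemma Yval_transpose_add:
  fixes L R :: "'a::field mat"
  assumes L: "L \<in> carrier_mat k n" and R: "R \<in> carrier_mat n k"
    and ab: "a \<in> {0..<n} - I" "b \<in> {0..<n} - I" "a \<noteq> b"
    and nz: "DeltaR R (swap1 I i b) \<noteq> 0" "DeltaR R (swap1 I j a) \<noteq> 0"
      "DeltaL L (swap1 I i b) \<noteq> 0" "DeltaL L (swap1 I j a) \<noteq> 0"
  shows "Yval R I i j a b + Yval (transpose_mat L) I i j a b =
    (hfun L R I * hfun L R (swap2 I i j a b) - hfun L R (swap1 I i a) * hfun L R (swap1 I j b)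
      - hfun L R (swap1 I i b) * hfun L R (swap1 I j a)) / (hfun L R (swap1 I i b) * hfun L R (swap1 I j a))"
proof -
  let ?LT = "transpose_mat L" and ?h = "hfun L R"
  have DL: "DeltaL L J = DeltaR ?LT J" if "J \<in> ksubsets k n" for J
    using that by (intro DeltaL_eq_DeltaR_transpose[OF L]) (auto simp: ksubsets_def)
  have LT: "?LT \<in> carrier_mat n k" using L by simp
  have nzT: "DeltaR ?LT (swap1 I i b) \<noteq> 0" "DeltaR ?LT (swap1 I j a) \<noteq> 0"
    using nz DL swap1_ksubsets ij ab by auto
  have "(1 + Yval R I i j a b) * (1 + Yval ?LT I i j a b) =
      (exchange_sign i j a b * exchange_sign i j a b) * (DeltaR R I * DeltaR ?LT I) *
      (DeltaR R (swap2 I i j a b) * DeltaR ?LT (swap2 I i j a b)) /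
      ((DeltaR R (swap1 I j a) * DeltaR ?LT (swap1 I j a)) * (DeltaR R (swap1 I i b) * DeltaR ?LT (swap1 I i b)))"
    unfolding one_plus_Yval[OF R ab nz(2,1)] one_plus_Yval[OF LT ab nzT(2,1)] by (simp add: field_simps)
  also have "\<dots> = ?h I * ?h (swap2 I i j a b) / (?h (swap1 I j a) * ?h (swap1 I i b))"
    unfolding hfun_def using DL I swap2_ksubsets[OF ab] swap1_ksubsets ij ab by (simp add: mult_ac)
  finally have "(1 + Yval R I i j a b) * (1 + Yval ?LT I i j a b) =
      ?h I * ?h (swap2 I i j a b) / (?h (swap1 I j a) * ?h (swap1 I i b))" .
  moreover have "?h (swap1 I i b) \<noteq> 0" "?h (swap1 I j a) \<noteq> 0" using nz by (auto simp: hfun_def)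
  ultimately show ?thesis
    using Yval_transpose_mult[OF L ab nz] by (simp add: field_simps)
qed

end

section \<open>Monomials in the group algebra of an ordered group\<close>

definition is_monomial :: "('a \<Rightarrow>\<^sub>0 'b::zero) \<Rightarrow> bool" where
  "is_monomial u \<longleftrightarrow> (\<exists>e c. c \<noteq> 0 \<and> u = Poly_Mapping.single e c)"

lemma lookup_mult_unique_sum:
  fixes f g :: "'a::cancel_comm_monoid_add \<Rightarrow>\<^sub>0 'b::comm_ring_1"
  assumes unique: "\<And>x y. x \<in> Poly_Mapping.keys f \<Longrightarrow> y \<in> Poly_Mapping.keys g \<Longrightarrow> x + y = m + m'
    \<Longrightarrow> x = m \<and> y = m'"
  shows "Poly_Mapping.lookup (f * g) (m + m') = Poly_Mapping.lookup f m * Poly_Mapping.lookup g m'"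
proof -
  define sf sg where "sf = Poly_Mapping.single m (Poly_Mapping.lookup f m)"
    and "sg = Poly_Mapping.single m' (Poly_Mapping.lookup g m')"
  have f': "x \<in> Poly_Mapping.keys (f - sf) \<Longrightarrow> x \<in> Poly_Mapping.keys f \<and> x \<noteq> m"
    and g': "y \<in> Poly_Mapping.keys (g - sg) \<Longrightarrow> y \<in> Poly_Mapping.keys g \<and> y \<noteq> m'" for x y
    by (auto simp: sf_def sg_def in_keys_iff lookup_minus lookup_single when_def split: if_splits)
  have "m + m' \<notin> Poly_Mapping.keys (sf * (g - sg))"
    using keys_mult[of sf "g - sg"] g' by (fastforce simp: sf_def split: if_splits)
  moreover have "m + m' \<notin> Poly_Mapping.keys ((f - sf) * g)"
    using keys_mult[of "f - sf" g] f' unique by fastforce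
  moreover have "f * g = sf * sg + sf * (g - sg) + (f - sf) * g"
    by (simp add: algebra_simps)
  ultimately show ?thesis by (simp add: sf_def sg_def in_keys_iff lookup_add mult_single)
qed

lemma Max_keys_mult:
  fixes f g :: "'a::linordered_ab_group_add \<Rightarrow>\<^sub>0 'b::idom"
  assumes "f \<noteq> 0" "g \<noteq> 0"
  shows "Max (Poly_Mapping.keys (f * g)) = Max (Poly_Mapping.keys f) + Max (Poly_Mapping.keys g)"
proof (rule Max_eqI)
  let ?M = "Max (Poly_Mapping.keys f)" and ?M' = "Max (Poly_Mapping.keys g)"
  have le: "x \<le> ?M" "y \<le> ?M'" if "x \<in> Poly_Mapping.keys f" "y \<in> Poly_Mapping.keys g" for x y
    using that by (auto intro: Max_ge)
  show "x \<le> ?M + ?M'" if "x \<in> Poly_Mapping.keys (f * g)" for x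
    using keys_mult[of f g] that le by (blast intro: add_mono)
  have "Poly_Mapping.lookup (f * g) (?M + ?M') = Poly_Mapping.lookup f ?M * Poly_Mapping.lookup g ?M'"
    using le by (intro lookup_mult_unique_sum) (metis add_less_le_mono add_le_less_mono order_less_irrefl le_less)
  then show "?M + ?M' \<in> Poly_Mapping.keys (f * g)"
    using Max_in[of "Poly_Mapping.keys f"] Max_in[of "Poly_Mapping.keys g"] assms by (simp add: in_keys_iff)
qed simp

lemma Min_keys_mult:
  fixes f g :: "'a::linordered_ab_group_add \<Rightarrow>\<^sub>0 'b::idom"
  assumes "f \<noteq> 0" "g \<noteq> 0"
  shows "Min (Poly_Mapping.keys (f * g)) = Min (Poly_Mapping.keys f) + Min (Poly_Mapping.keys g)"
proof (rule Min_eqI)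
  let ?m = "Min (Poly_Mapping.keys f)" and ?m' = "Min (Poly_Mapping.keys g)"
  have ge: "?m \<le> x" "?m' \<le> y" if "x \<in> Poly_Mapping.keys f" "y \<in> Poly_Mapping.keys g" for x y
    using that by (auto intro: Min_le)
  show "?m + ?m' \<le> x" if "x \<in> Poly_Mapping.keys (f * g)" for x
    using keys_mult[of f g] that ge by (blast intro: add_mono)
  have "Poly_Mapping.lookup (f * g) (?m + ?m') = Poly_Mapping.lookup f ?m * Poly_Mapping.lookup g ?m'"
    using ge by (intro lookup_mult_unique_sum) (metis add_less_le_mono add_le_less_mono order_less_irrefl le_less)
  then show "?m + ?m' \<in> Poly_Mapping.keys (f * g)"
    using Min_in[of "Poly_Mapping.keys f"] Min_in[of "Poly_Mapping.keys g"] assms by (simp add: in_keys_iff)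
qed simp

lemma is_monomial_if_Max_keys_eq_Min_keys:
  fixes u :: "'a::linorder \<Rightarrow>\<^sub>0 'b::zero"
  assumes "u \<noteq> 0" "Max (Poly_Mapping.keys u) = Min (Poly_Mapping.keys u)"
  shows "is_monomial u"
proof -
  define e where "e = Max (Poly_Mapping.keys u)"
  have "Poly_Mapping.keys u = {e}"
    using assms Max_ge[of "Poly_Mapping.keys u"] Min_le[of "Poly_Mapping.keys u"] Max_in[of "Poly_Mapping.keys u"]
    unfolding e_def by (fastforce intro: antisym)
  then have "u = Poly_Mapping.single e (Poly_Mapping.lookup u e)" and "Poly_Mapping.lookup u e \<noteq> 0"
    by (auto intro!: poly_mapping_eqI simp: lookup_single when_def simp flip: not_in_keys_iff_lookup_eq_zero)
  then show ?thesis unfolding is_monomial_def by blast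
qed

lemma Min_keys_le_Max_keys: "u \<noteq> 0 \<Longrightarrow> Min (Poly_Mapping.keys u) \<le> Max (Poly_Mapping.keys u)"
  by (metis Max_ge Min_in finite_keys keys_eq_empty)

lemma unit_imp_is_monomial:
  fixes u :: "'a::linordered_ab_group_add \<Rightarrow>\<^sub>0 'b::idom"
  assumes "u dvd 1"
  shows "is_monomial u"
proof -
  obtain v where v: "1 = u * v" using assms by (auto elim: dvdE)
  then have nz: "u \<noteq> 0" "v \<noteq> 0" by auto
  let ?M = "\<lambda>w. Max (Poly_Mapping.keys w)" and ?m = "\<lambda>w. Min (Poly_Mapping.keys w)"
  have "?M u + ?M v = 0" "?m u + ?m v = 0"
    using Max_keys_mult[OF nz] Min_keys_mult[OF nz] by (simp_all flip: v)
  then have "?M u = ?m u"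
    using Min_keys_le_Max_keys[OF nz(1)] Min_keys_le_Max_keys[OF nz(2)]
    by (metis add_less_le_mono antisym_conv1 order_less_irrefl)
  then show ?thesis using is_monomial_if_Max_keys_eq_Min_keys nz by blast
qed

lemma is_monomial_square_imp:
  fixes u :: "'a::linordered_ab_group_add \<Rightarrow>\<^sub>0 'b::idom"
  assumes "is_monomial (u * u)"
  shows "is_monomial u"
proof -
  obtain e c where "c \<noteq> 0" "u * u = Poly_Mapping.single e c" using assms unfolding is_monomial_def by blast
  then have keys: "Poly_Mapping.keys (u * u) = {e}" by simp
  then have nz: "u \<noteq> 0" by auto
  let ?M = "Max (Poly_Mapping.keys u)" and ?m = "Min (Poly_Mapping.keys u)"
  from keys have "?M + ?M = ?m + ?m"
    using Max_keys_mult[OF nz nz] Min_keys_mult[OF nz nz] by simp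
  then have "?M = ?m"
    using Min_keys_le_Max_keys[OF nz] by (metis add_strict_mono antisym_conv1 order_less_irrefl)
  then show ?thesis using is_monomial_if_Max_keys_eq_Min_keys nz by blast
qed

lemma is_monomial_mult:
  fixes u v :: "'a::monoid_add \<Rightarrow>\<^sub>0 'b::{semiring_0, semiring_no_zero_divisors}"
  assumes "is_monomial u" "is_monomial v"
  shows "is_monomial (u * v)"
  using assms unfolding is_monomial_def by (metis mult_single no_zero_divisors)

lemma is_monomial_lookup_nonzero_unique:
  "is_monomial u \<Longrightarrow> Poly_Mapping.lookup u x \<noteq> 0 \<Longrightarrow> Poly_Mapping.lookup u y \<noteq> 0 \<Longrightarrow> x = y"
  by (auto simp: is_monomial_def lookup_single when_def split: if_splits)

definition const_multiple :: "('a::monoid_add \<Rightarrow>\<^sub>0 'b::semiring_0) \<Rightarrow> ('a \<Rightarrow>\<^sub>0 'b) \<Rightarrow> bool" where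
  "const_multiple u v \<longleftrightarrow> (\<exists>\<kappa>. \<kappa> \<noteq> 0 \<and> u = Poly_Mapping.single 0 \<kappa> * v)"

definition has_unequal_pair :: "('a \<Rightarrow> 'a \<Rightarrow> bool) \<Rightarrow> 'a list \<Rightarrow> bool" where
  "has_unequal_pair P xs \<longleftrightarrow>
     (\<exists>p < length xs. \<exists>q < length xs. p \<noteq> q \<and> P (xs ! p) (xs ! q) \<and> xs ! p \<noteq> xs ! q)"

lemma const_multiple_single:
  fixes \<alpha> \<beta> :: "'b::field"
  assumes "\<alpha> \<noteq> 0" "\<beta> \<noteq> 0"
  shows "const_multiple (Poly_Mapping.single e \<alpha> :: 'a::monoid_add \<Rightarrow>\<^sub>0 'b) (Poly_Mapping.single e \<beta>)"
  unfolding const_multiple_def using assms by (intro exI[of _ "\<alpha> / \<beta>"]) (simp add: mult_single)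

lemma has_unequal_pair_single:
  fixes \<alpha> \<beta> :: "'b::field"
  assumes "\<alpha> \<noteq> 0" "\<beta> \<noteq> 0" "\<alpha> \<noteq> \<beta>" "p < length xs" "q < length xs" "p \<noteq> q"
    and "xs ! p = Poly_Mapping.single e \<alpha>" "xs ! q = (Poly_Mapping.single e \<beta> :: 'a::monoid_add \<Rightarrow>\<^sub>0 'b)"
  shows "has_unequal_pair const_multiple xs"
  unfolding has_unequal_pair_def using assms const_multiple_single[OF assms(1,2)]
  by (metis lookup_single_eq)

lemma double_eq_imp_eq: "x + x = y + y \<Longrightarrow> (x::'a::linordered_ab_group_add) = y"
  by (metis add_strict_mono less_irrefl linorder_neqE)

text \<open>If \<open>(A - B - C)\<^sup>2 = 4 B C\<close> for monomials, the square root \<open>A - B - C\<close> is a monomial whose exponent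
  is the average of those of \<open>B\<close> and \<open>C\<close>; as \<open>A\<close> is a single monomial, the exponents of \<open>B\<close> and \<open>C\<close> agree.\<close>

lemma trinomial_square_imp_const_multiple:
  fixes A B C :: "'a::linordered_ab_group_add \<Rightarrow>\<^sub>0 'b::field_char_0"
  assumes A: "is_monomial A" and B: "is_monomial B" and C: "is_monomial C"
    and sq: "(A - B - C) * (A - B - C) = 4 * (B * C)"
  shows "\<exists>\<kappa>. A - B - C = Poly_Mapping.single 0 \<kappa> * C"
proof -
  obtain eB \<beta> where \<beta>: "\<beta> \<noteq> 0" "B = Poly_Mapping.single eB \<beta>" using B unfolding is_monomial_def by blast
  obtain eC \<gamma> where \<gamma>: "\<gamma> \<noteq> 0" "C = Poly_Mapping.single eC \<gamma>" using C unfolding is_monomial_def by blast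
  have BC: "4 * (B * C) = Poly_Mapping.single (eB + eC) (4 * (\<beta> * \<gamma>))"
    unfolding \<beta> \<gamma> by (simp add: mult_single flip: single_numeral)
  then have "is_monomial ((A - B - C) * (A - B - C))"
    unfolding sq BC is_monomial_def using \<beta> \<gamma> by (intro exI[of _ "eB + eC"] exI[of _ "4 * (\<beta> * \<gamma>)"]) simp
  then obtain e \<delta> where \<delta>: "\<delta> \<noteq> 0" "A - B - C = Poly_Mapping.single e \<delta>"
    using is_monomial_square_imp unfolding is_monomial_def by blast
  have "Poly_Mapping.keys (Poly_Mapping.single (e + e) (\<delta> * \<delta>)) =
      Poly_Mapping.keys (Poly_Mapping.single (eB + eC) (4 * (\<beta> * \<gamma>)))"
    using sq unfolding BC \<delta>(2) mult_single by simp
  then have ee: "e + e = eB + eC" using \<beta> \<gamma> \<delta> by simp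
  have "e = eC"
  proof (rule ccontr)
    assume "e \<noteq> eC"
    then have "eB \<noteq> eC" "eB \<noteq> e" using ee double_eq_imp_eq[of e eC] by auto
    moreover have "Poly_Mapping.lookup A x = Poly_Mapping.lookup (Poly_Mapping.single e \<delta> + B + C) x" for x
      using \<delta>(2) by (simp add: algebra_simps flip: \<delta>(2))
    ultimately have "Poly_Mapping.lookup A eB \<noteq> 0" "Poly_Mapping.lookup A eC \<noteq> 0"
      using \<open>e \<noteq> eC\<close> \<beta> \<gamma> by (auto simp: lookup_add lookup_single when_def)
    then show False using is_monomial_lookup_nonzero_unique[OF A] \<open>eB \<noteq> eC\<close> by blast
  qed
  then have "A - B - C = Poly_Mapping.single 0 (\<delta> / \<gamma>) * C"
    using \<delta>(2) \<gamma> by (simp add: mult_single)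
  then show ?thesis ..
qed

text \<open>The relation \<open>eq\<close> expresses the monomial \<open>M\<close> through \<open>A C', B C', C C'\<close> with the nonzero coefficients
  \<open>c, c\<^sup>2 - c, 1 - c\<close>. Unless two of \<open>A, B, C\<close> have the same exponent but different coefficients,
  this always leaves two distinct exponents with nonzero coefficients.\<close>

lemma monomial_triple_has_unequal_pair:
  fixes A B C C' M :: "'a::cancel_comm_monoid_add \<Rightarrow>\<^sub>0 'b::field" and c :: 'b
  assumes A: "is_monomial A" and B: "is_monomial B" and C: "is_monomial C" and C': "is_monomial C'"
    and M: "is_monomial M" and c: "c \<noteq> 0" "c \<noteq> 1"
    and eq: "Poly_Mapping.single 0 c * (A * C') + Poly_Mapping.single 0 (c * c - c) * (B * C')
      - Poly_Mapping.single 0 (c - 1) * (C * C') = M"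
    and not_all_equal: "\<not> (A = B \<and> B = C)"
  shows "has_unequal_pair const_multiple [A, B, C]"
proof (rule ccontr)
  assume none: "\<not> has_unequal_pair const_multiple [A, B, C]"
  obtain eA \<alpha> where \<alpha>: "\<alpha> \<noteq> 0" "A = Poly_Mapping.single eA \<alpha>" using A unfolding is_monomial_def by blast
  obtain eB \<beta> where \<beta>: "\<beta> \<noteq> 0" "B = Poly_Mapping.single eB \<beta>" using B unfolding is_monomial_def by blast
  obtain eC \<gamma> where \<gamma>: "\<gamma> \<noteq> 0" "C = Poly_Mapping.single eC \<gamma>" using C unfolding is_monomial_def by blast
  obtain eC' \<gamma>' where \<gamma>': "\<gamma>' \<noteq> 0" "C' = Poly_Mapping.single eC' \<gamma>'" using C' unfolding is_monomial_def by blast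
  have AB: "\<alpha> = \<beta>" if "eA = eB"
    using has_unequal_pair_single[of \<alpha> \<beta> 0 "[A, B, C]" 1 eA] none \<alpha> \<beta> that by force
  have AC: "\<alpha> = \<gamma>" if "eA = eC"
    using has_unequal_pair_single[of \<alpha> \<gamma> 0 "[A, B, C]" 2 eA] none \<alpha> \<gamma> that by force
  have BC: "\<beta> = \<gamma>" if "eB = eC"
    using has_unequal_pair_single[of \<beta> \<gamma> 1 "[A, B, C]" 2 eB] none \<beta> \<gamma> that by force
  have lookup_M: "Poly_Mapping.lookup M x = (c * (\<alpha> * \<gamma>') when eA + eC' = x)
      + ((c * c - c) * (\<beta> * \<gamma>') when eB + eC' = x) - ((c - 1) * (\<gamma> * \<gamma>') when eC + eC' = x)" for x
    unfolding eq[symmetric] \<alpha>(2) \<beta>(2) \<gamma>(2) \<gamma>'(2)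
    by (simp add: mult_single lookup_add lookup_minus lookup_single)
  have c1: "c - 1 \<noteq> 0" using c by simp
  show False
  proof (cases "eA = eB")
    case True
    then have "eA \<noteq> eC" using not_all_equal AB AC \<alpha> \<beta> \<gamma> by auto
    have "Poly_Mapping.lookup M (eA + eC') = c * (\<alpha> * \<gamma>') + (c * c - c) * (\<alpha> * \<gamma>')"
      using True \<open>eA \<noteq> eC\<close> AB[OF True] by (simp add: lookup_M when_def)
    also have "\<dots> = c * c * (\<alpha> * \<gamma>')" by (simp add: algebra_simps)
    moreover have "Poly_Mapping.lookup M (eC + eC') = - ((c - 1) * (\<gamma> * \<gamma>'))"
      using True \<open>eA \<noteq> eC\<close> by (auto simp: lookup_M when_def)
    ultimately show False
      using is_monomial_lookup_nonzero_unique[OF M, of "eA + eC'" "eC + eC'"] \<open>eA \<noteq> eC\<close> \<alpha> \<gamma> \<gamma>' c c1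
      by simp
  next
    case False
    have "Poly_Mapping.lookup M (eA + eC') =
        (if eA = eC then c * (\<alpha> * \<gamma>') - (c - 1) * (\<alpha> * \<gamma>') else c * (\<alpha> * \<gamma>'))"
      using False AC by (auto simp: lookup_M when_def)
    also have "\<dots> = (if eA = eC then \<alpha> * \<gamma>' else c * (\<alpha> * \<gamma>'))" by (simp add: algebra_simps)
    finally have at_A: "Poly_Mapping.lookup M (eA + eC') = \<dots>" .
    have "Poly_Mapping.lookup M (eB + eC') = (if eB = eC then (c * c - c) * (\<beta> * \<gamma>')
        - (c - 1) * (\<beta> * \<gamma>') else (c * c - c) * (\<beta> * \<gamma>'))"
      using False BC by (auto simp: lookup_M when_def)
    also have "\<dots> = (if eB = eC then (c - 1) * (c - 1) * (\<beta> * \<gamma>') else c * (c - 1) * (\<beta> * \<gamma>'))"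
      by (simp add: algebra_simps)
    finally show False
      using at_A is_monomial_lookup_nonzero_unique[OF M, of "eA + eC'" "eB + eC'"] False \<alpha> \<beta> \<gamma>' c c1
      by (simp split: if_splits)
  qed
qed

section \<open>The embeddings into the algebraic closure\<close>

lemma embL_add [simp]: "embL (u + v) = embL u + embL v"
  and embL_diff [simp]: "embL (u - v) = embL u - embL v"
  and embL_minus [simp]: "embL (- u) = - embL u"
  and embL_mult [simp]: "embL (u * v) = embL u * embL v"
  by (simp_all add: embL_def embF_def flip: to_ac_add to_ac_diff to_ac_minus to_ac_mult)

lemma embL_numeral [simp]: "embL (numeral m) = (numeral m :: 'd::{finite,linorder} fbar)"
proof -
  have "Fract (numeral m) 1 = (numeral m :: 'd laurent fract)"
    using Fract_of_nat_eq[of "numeral m"] by simp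
  then show ?thesis by (simp add: embL_def embF_def)
qed

lemma embL_0 [simp]: "embL 0 = 0" and embL_1 [simp]: "embL 1 = 1"
  by (simp_all add: embL_def embF_def flip: Zero_fract_def One_fract_def)

lemma embL_eq_iff [simp]: "embL u = embL v \<longleftrightarrow> u = v"
  by (simp add: embL_def embF_def eq_fract)

lemma embC_eq_embL: "embC c = embL (Poly_Mapping.single 0 c)"
  by (simp add: embC_def)

lemma embC_mult [simp]: "embC (a * b) = embC a * embC b"
  and embC_add [simp]: "embC (a + b) = embC a + embC b"
  and embC_minus [simp]: "embC (- a) = - embC a"
  and embC_diff [simp]: "embC (a - b) = embC a - embC b"
  by (simp_all add: embC_eq_embL mult_single single_add single_uminus single_diff
      flip: embL_mult embL_add embL_minus embL_diff)

lemma embC_eq_iff [simp]: "embC a = (embC b :: 'd::{finite,linorder} fbar) \<longleftrightarrow> a = b"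
  by (simp add: embC_eq_embL) (metis lookup_single_eq)

lemma embC_0 [simp]: "embC 0 = 0" and embC_1 [simp]: "embC 1 = 1"
  by (simp_all add: embC_eq_embL)

lemma eq_embC_half_if_double:
  fixes x :: "'d::{finite,linorder} fbar"
  assumes "x + x = embC \<kappa>"
  shows "x = embC (\<kappa> / 2)"
proof -
  have "embC 2 = (2 :: 'd fbar)" using embC_add[of 1 1] by simp
  then have "(2 :: 'd fbar) \<noteq> 0" by (metis embC_0 embC_eq_iff zero_neq_numeral)
  moreover have "embC (\<kappa> / 2) + embC (\<kappa> / 2) = (embC \<kappa> :: 'd fbar)" by (simp flip: embC_add)
  then have "2 * x = 2 * embC (\<kappa> / 2)" unfolding mult_2 using assms by simp
  ultimately show ?thesis by simp
qed

lemma embL_single_mult: "embL (Poly_Mapping.single 0 c * u) = embC c * embL u"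
  by (simp add: embC_eq_embL)

lemma inF_add: "inF x \<Longrightarrow> inF y \<Longrightarrow> inF (x + y)"
  and inF_diff: "inF x \<Longrightarrow> inF y \<Longrightarrow> inF (x - y)"
  and inF_mult: "inF x \<Longrightarrow> inF y \<Longrightarrow> inF (x * y)"
  and inF_divide: "inF x \<Longrightarrow> inF y \<Longrightarrow> inF (x / y)"
  by (auto simp: inF_def embF_def simp flip: to_ac_add to_ac_diff to_ac_mult to_ac_divide)

lemma inF_embL: "inF (embL u)"
  by (simp add: inF_def embL_def)

lemma inC_imp_inF: "inC x \<Longrightarrow> inF x"
  by (auto simp: inC_def embC_eq_embL inF_embL)

lemma propC_embL: "const_multiple u v \<Longrightarrow> propC (embL u) (embL v)"
  unfolding const_multiple_def propC_def using embL_single_mult by blast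

lemma has_unequal_pair_embL:
  assumes "has_unequal_pair const_multiple xs"
  shows "has_unequal_pair propC (map embL xs)"
proof -
  obtain p q where "p < length xs" "q < length xs" "p \<noteq> q" "const_multiple (xs ! p) (xs ! q)" "xs ! p \<noteq> xs ! q"
    using assms unfolding has_unequal_pair_def by blast
  then have "p < length (map embL xs) \<and> q < length (map embL xs) \<and> p \<noteq> q \<and>
      propC (map embL xs ! p) (map embL xs ! q) \<and> map embL xs ! p \<noteq> map embL xs ! q"
    by (simp add: propC_embL)
  then show ?thesis unfolding has_unequal_pair_def by blast
qed

lemma is_Lunit_imp_monomial: "is_Lunit x \<Longrightarrow> \<exists>u. is_monomial u \<and> x = embL u"
  by (auto simp: is_Lunit_def intro: unit_imp_is_monomial)

lemma inC_if_sq_plus_self_plus_one_eq_0: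
  fixes y :: "'d::{finite,linorder} fbar"
  assumes "y * y + y + 1 = 0"
  shows "inC y"
proof -
  define \<omega> where "\<omega> = (-1 + \<i> * complex_of_real (sqrt 3)) / 2"
  define \<omega>' where "\<omega>' = (-1 - \<i> * complex_of_real (sqrt 3)) / 2"
  have "complex_of_real (sqrt 3) * complex_of_real (sqrt 3) = 3" by (simp flip: of_real_mult)
  then have sum: "\<omega> + \<omega>' = -1" and prod: "\<omega> * \<omega>' = 1" by (simp_all add: \<omega>_def \<omega>'_def field_simps)
  have "(y - embC \<omega>) * (y - embC \<omega>') = y * y - embC (\<omega> + \<omega>') * y + embC (\<omega> * \<omega>')"
    by (simp add: algebra_simps)
  also have "\<dots> = 0" unfolding sum prod using assms by simp
  finally have "y = embC \<omega> \<or> y = embC \<omega>'" by simp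
  then show ?thesis by (auto simp: inC_def)
qed

section \<open>Radical exchange ratios\<close>

lemma chain_eq_if_inF:
  fixes y yL y' y'L s sL :: "'d::{finite,linorder} fbar"
  assumes chain: "y' = - (y * s)" "y'L = - (yL * sL)"
    and F: "inF (y + yL)" "inF (y' + y'L)" "inF s" "inF sL" and y: "\<not> inF y"
  shows "s = sL"
proof (rule ccontr)
  assume "s \<noteq> sL"
  have "yL * (s - sL) = s * (y + yL) + (y' + y'L)" unfolding chain by (simp add: algebra_simps)
  then have yL: "yL = (s * (y + yL) + (y' + y'L)) / (s - sL)" using \<open>s \<noteq> sL\<close> by (simp add: field_simps)
  have "inF yL" by (subst yL) (intro inF_divide inF_add inF_mult inF_diff F)
  then have "inF ((y + yL) - yL)" by (rule inF_diff[OF F(1)])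
  then show False using y by simp
qed

lemma scaled_pair_relation:
  fixes A B C A' B' C' y yL c :: "'a::field"
  assumes "C \<noteq> 0" "C' \<noteq> 0"
    and "y * yL = B / C" "y + yL = (A - B - C) / C"
    and "(c * y) * (c * yL) = B' / C'" "c * y + c * yL = (A' - B' - C') / C'"
  shows "c * (A * C') + (c * c - c) * (B * C') - (c - 1) * (C * C') = A' * C"
proof -
  have "(A' - B' - C') / C' = c * (y + yL)" "B' / C' = c * c * (y * yL)"
    using assms(5,6) by (simp_all add: algebra_simps)
  then have "(A' - B' - C') / C' = c * ((A - B - C) / C)" "B' / C' = c * c * (B / C)"
    using assms(3,4) by simp_all
  then show ?thesis using assms(1,2) by (simp add: field_simps)
qed

locale laurent_exchange = basis_exchange k n I i j
  for k n :: nat and I :: "nat set" and i j :: nat +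
  fixes L R :: "'d::{finite,linorder} fbar mat"
  assumes L: "L \<in> carrier_mat k n" and R: "R \<in> carrier_mat n k"
    and SA1: "\<forall>J \<in> ksubsets k n. DeltaR R J \<noteq> 0"
    and SA2: "\<forall>J \<in> ksubsets k n. DeltaL L J \<noteq> 0 \<longrightarrow> is_Lunit (hfun L R J)"
begin

abbreviation YR where "YR \<equiv> Yval R I i j"
abbreviation YL where "YL \<equiv> Yval (transpose_mat L) I i j"

lemma hfun_product_monomial:
  assumes "J \<in> ksubsets k n" "J' \<in> ksubsets k n" "hfun L R J * hfun L R J' \<noteq> 0"
  shows "\<exists>u. is_monomial u \<and> hfun L R J * hfun L R J' = embL u"
proof -
  have "is_Lunit (hfun L R K)" if "K \<in> ksubsets k n" "hfun L R K \<noteq> 0" for K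
    using SA2 that by (simp add: hfun_def)
  then obtain u u' where "is_monomial u" "hfun L R J = embL u" "is_monomial u'" "hfun L R J' = embL u'"
    using assms is_Lunit_imp_monomial by (metis mult_zero_left mult_zero_right)
  then have "is_monomial (u * u')" "hfun L R J * hfun L R J' = embL (u * u')"
    by (simp_all add: is_monomial_mult)
  then show ?thesis by blast
qed

lemma htriple_monomial:
  assumes ab: "a \<in> {0..<n} - I" "b \<in> {0..<n} - I" "a \<noteq> b"
    and x: "x \<in> set (htriple L R I i j a b)" "x \<noteq> 0"
  shows "\<exists>u. is_monomial u \<and> x = embL u"
proof -
  have "x = hfun L R I * hfun L R (swap2 I i j a b) \<or> x = hfun L R (swap1 I i a) * hfun L R (swap1 I j b)
      \<or> x = hfun L R (swap1 I i b) * hfun L R (swap1 I j a)"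
    using x(1) by (simp add: htriple_def)
  moreover note ks = I swap2_ksubsets[OF ab] swap1_ksubsets[OF ij(1) ab(1)] swap1_ksubsets[OF ij(2) ab(2)]
    swap1_ksubsets[OF ij(1) ab(2)] swap1_ksubsets[OF ij(2) ab(1)]
  ultimately show ?thesis
    using x(2) hfun_product_monomial[OF ks(1,2)] hfun_product_monomial[OF ks(3,4)]
      hfun_product_monomial[OF ks(5,6)] by blast
qed

lemma htriple_inF:
  assumes "a \<in> {0..<n} - I" "b \<in> {0..<n} - I" "a \<noteq> b" "x \<in> set (htriple L R I i j a b)"
  shows "inF x"
  using htriple_monomial[OF assms] inF_embL[of 0] by (cases "x = 0") (auto simp: inF_embL)

lemma DeltaR_swap1_nonzero: "x \<in> I \<Longrightarrow> a \<in> {0..<n} - I \<Longrightarrow> DeltaR R (swap1 I x a) \<noteq> 0"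
  using SA1 swap1_ksubsets by blast

lemma YR_YL_product_sum:
  assumes ab: "a \<in> {0..<n} - I" "b \<in> {0..<n} - I" "a \<noteq> b"
    and triple: "htriple L R I i j a b = [A, B, C]" and C: "C \<noteq> 0"
  shows "YR a b * YL a b = B / C" "YR a b + YL a b = (A - B - C) / C"
proof -
  have "hfun L R (swap1 I i b) \<noteq> 0" "hfun L R (swap1 I j a) \<noteq> 0"
    using triple C by (auto simp: htriple_def)
  then have nz: "DeltaR R (swap1 I i b) \<noteq> 0" "DeltaR R (swap1 I j a) \<noteq> 0"
    "DeltaL L (swap1 I i b) \<noteq> 0" "DeltaL L (swap1 I j a) \<noteq> 0"
    using DeltaR_swap1_nonzero ij ab by (auto simp: hfun_def)
  show "YR a b * YL a b = B / C" "YR a b + YL a b = (A - B - C) / C"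
    using Yval_transpose_mult[OF L ab nz] Yval_transpose_add[OF L R ab nz] triple by (auto simp: htriple_def)
qed

lemma YR_nonzero: "a \<in> {0..<n} - I \<Longrightarrow> b \<in> {0..<n} - I \<Longrightarrow> YR a b \<noteq> 0"
  by (intro Yval_nonzero DeltaR_swap1_nonzero) (use ij in auto)

lemma one_plus_YR_nonzero:
  assumes ab: "a \<in> {0..<n} - I" "b \<in> {0..<n} - I" "a \<noteq> b"
  shows "1 + YR a b \<noteq> 0"
proof -
  have "exchange_sign i j a b \<noteq> (0 :: 'd fbar)" by (metis exchange_sign_square mult_zero_left zero_neq_one)
  moreover have "DeltaR R I \<noteq> 0" "DeltaR R (swap2 I i j a b) \<noteq> 0"
    using SA1 I swap2_ksubsets[OF ab] by auto
  moreover note nz = DeltaR_swap1_nonzero[OF ij(2) ab(1)] DeltaR_swap1_nonzero[OF ij(1) ab(2)]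
  ultimately show ?thesis using one_plus_Yval[OF R ab nz] nz by auto
qed

lemma YR_YL_chain:
  assumes a: "a \<in> {0..<n} - I" "b \<in> {0..<n} - I" "c \<in> {0..<n} - I"
    and h: "\<forall>x \<in> {i, j}. \<forall>e \<in> {a, b, c}. hfun L R (swap1 I x e) \<noteq> 0"
  shows "YR a c = - (YR a b * YR b c)" "YL a c = - (YL a b * YL b c)"
proof -
  have "b \<noteq> i" "b \<noteq> j" using a ij by auto
  moreover have "DeltaR R (swap1 I x e) \<noteq> 0" if "x \<in> {i, j}" "e \<in> {a, b, c}" for x e
    using DeltaR_swap1_nonzero that ij a by auto
  moreover have "DeltaR (transpose_mat L) (swap1 I x e) \<noteq> 0" if "x \<in> {i, j}" "e \<in> {a, b, c}" for x e
    using h that swap1_ksubsets[of x e] ij a DeltaL_eq_DeltaR_transpose[OF L]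
    by (auto simp: hfun_def ksubsets_def)
  ultimately show "YR a c = - (YR a b * YR b c)" "YL a c = - (YL a b * YL b c)"
    by (simp_all add: Yval_chain)
qed

lemma htriple_eq_map_embL:
  assumes ab: "a \<in> {0..<n} - I" "b \<in> {0..<n} - I" "a \<noteq> b"
    and nz: "0 \<notin> set (htriple L R I i j a b)"
  shows "\<exists>uA uB uC. is_monomial uA \<and> is_monomial uB \<and> is_monomial uC \<and>
    htriple L R I i j a b = map embL [uA, uB, uC]"
proof -
  obtain A B C where t: "htriple L R I i j a b = [A, B, C]" using htriple_def by blast
  have "\<exists>u. is_monomial u \<and> x = embL u" if "x \<in> set [A, B, C]" for x
    using htriple_monomial[OF ab, of x] nz that unfolding t by blast
  then obtain uA uB uC where "is_monomial uA" "A = embL uA" "is_monomial uB" "B = embL uB"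
      "is_monomial uC" "C = embL uC"
    by (metis list.set_intros(1,2))
  then show ?thesis using t by auto
qed

lemma radical_htriple_nonzero: "radical L R I i j a b \<Longrightarrow> 0 \<notin> set (htriple L R I i j a b)"
  by (auto simp: radical_def htriple_def)

lemma YR_eq_YL_if_inF:
  assumes a: "a1 \<in> {0..<n} - I" "a2 \<in> {0..<n} - I" "a3 \<in> {0..<n} - I" "a1 \<noteq> a2" "a1 \<noteq> a3" "a2 \<noteq> a3"
    and rad: "radical L R I i j a1 a2"
    and h3: "hfun L R (swap1 I i a3) \<noteq> 0" "hfun L R (swap1 I j a3) \<noteq> 0"
    and F: "inF (YR a2 a3)"
  shows "YR a2 a3 = YL a2 a3"
proof -
  have h: "\<forall>x \<in> {i, j}. \<forall>e \<in> {a1, a2, a3}. hfun L R (swap1 I x e) \<noteq> 0"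
    using rad h3 by (auto simp: radical_def)
  obtain A B C where t12: "htriple L R I i j a1 a2 = [A, B, C]" using htriple_def by blast
  obtain A' B' C' where t13: "htriple L R I i j a1 a3 = [A', B', C']" using htriple_def by blast
  obtain A'' B'' C'' where t23: "htriple L R I i j a2 a3 = [A'', B'', C'']" using htriple_def by blast
  have nz: "C \<noteq> 0" "C' \<noteq> 0" "C'' \<noteq> 0" using h t12 t13 t23 by (auto simp: htriple_def)
  have inF: "inF A" "inF B" "inF C" "inF A'" "inF B'" "inF C'" "inF B''" "inF C''"
    using htriple_inF[OF a(1,2,4)] htriple_inF[OF a(1,3,5)] htriple_inF[OF a(2,3,6)] t12 t13 t23 by auto
  note p12 = YR_YL_product_sum[OF a(1,2,4) t12 nz(1)]
  note p13 = YR_YL_product_sum[OF a(1,3,5) t13 nz(2)]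
  note p23 = YR_YL_product_sum[OF a(2,3,6) t23 nz(3)]
  have "YL a2 a3 = (B'' / C'') / YR a2 a3"
    using p23(1) YR_nonzero[OF a(2,3)] by (metis nonzero_mult_div_cancel_left)
  then have "inF (YL a2 a3)" using inF_divide[OF inF_divide[OF inF(7,8)] F] by simp
  moreover have "inF (YR a1 a2 + YL a1 a2)" "inF (YR a1 a3 + YL a1 a3)"
    unfolding p12(2) p13(2) using inF by (simp_all add: inF_diff inF_divide)
  moreover have "\<not> inF (YR a1 a2)" using rad by (simp add: radical_def)
  ultimately show ?thesis using chain_eq_if_inF YR_YL_chain[OF a(1-3) h] F by blast
qed

text \<open>If \<open>Y\<^sup>R = Y\<^sup>L = s\<close> then \<open>s\<^sup>2 = B/C\<close> and \<open>2s = (A - B - C)/C\<close>, so \<open>(A - B - C)\<^sup>2 = 4 B C\<close>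
  for the monomials \<open>A, B, C\<close> of the triple; hence \<open>2s\<close> is a constant.\<close>

lemma YR_inC_if_eq_YL:
  assumes ab: "a \<in> {0..<n} - I" "b \<in> {0..<n} - I" "a \<noteq> b"
    and h: "hfun L R (swap1 I i a) * hfun L R (swap1 I j b) \<noteq> 0"
      "hfun L R (swap1 I i b) * hfun L R (swap1 I j a) \<noteq> 0"
    and eq: "YR a b = YL a b"
  shows "inC (YR a b)"
proof -
  obtain A B C where t: "htriple L R I i j a b = [A, B, C]" using htriple_def by blast
  have BC: "B \<noteq> 0" "C \<noteq> 0" using h t by (auto simp: htriple_def)
  define s where "s = YR a b"
  have sq: "s * s = B / C" and twice: "s + s = (A - B - C) / C"
    using YR_YL_product_sum[OF ab t BC(2)] eq by (simp_all add: s_def)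
  have "(1 + s) * (1 + s) = A / C" using sq twice BC by (simp add: field_simps)
  then have "A \<noteq> 0" using one_plus_YR_nonzero[OF ab] BC by (auto simp: s_def)
  then obtain uA uB uC where u: "is_monomial uA" "is_monomial uB" "is_monomial uC"
      and t': "htriple L R I i j a b = map embL [uA, uB, uC]"
    using htriple_eq_map_embL[OF ab] t BC by auto
  have diff: "A - B - C = (s + s) * C" using twice BC by simp
  have "(A - B - C) * (A - B - C) = 4 * (B * C)"
    unfolding diff using sq BC by (simp add: field_simps)
  then have "(uA - uB - uC) * (uA - uB - uC) = 4 * (uB * uC)" using t t' by (simp flip: embL_eq_iff)
  then obtain \<kappa> where "uA - uB - uC = Poly_Mapping.single 0 \<kappa> * uC"
    using trinomial_square_imp_const_multiple[OF u] by blast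
  then have "embL (uA - uB - uC) = embC \<kappa> * embL uC" by (simp only: embL_single_mult)
  then have "(s + s) * C = embC \<kappa> * C" using t t' diff by simp
  then have "s = embC (\<kappa> / 2)" using BC by (intro eq_embC_half_if_double) simp
  then show ?thesis by (auto simp: s_def inC_def)
qed

lemma htriple_has_unequal_pair_if_scaled:
  assumes ab: "a \<in> {0..<n} - I" "b \<in> {0..<n} - I" "a \<noteq> b"
    and ab': "b' \<in> {0..<n} - I" "a \<noteq> b'"
    and rad: "radical L R I i j a b" and rad': "radical L R I i j a b'"
    and \<kappa>: "\<kappa> \<noteq> 0" "\<kappa> \<noteq> 1"
    and scaled: "YR a b' = embC \<kappa> * YR a b" "YL a b' = embC \<kappa> * YL a b"
  shows "has_unequal_pair propC (htriple L R I i j a b)"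
proof -
  obtain uA uB uC where u: "is_monomial uA" "is_monomial uB" "is_monomial uC"
      and t: "htriple L R I i j a b = map embL [uA, uB, uC]"
    using htriple_eq_map_embL[OF ab radical_htriple_nonzero[OF rad]] by blast
  obtain uA' uB' uC' where u': "is_monomial uA'" "is_monomial uB'" "is_monomial uC'"
      and t': "htriple L R I i j a b' = map embL [uA', uB', uC']"
    using htriple_eq_map_embL[OF ab(1) ab' radical_htriple_nonzero[OF rad']] by blast
  have nz: "embL uC \<noteq> 0" "embL uC' \<noteq> 0"
    using radical_htriple_nonzero[OF rad] radical_htriple_nonzero[OF rad'] t t' by auto
  note p = YR_YL_product_sum[OF ab t[simplified] nz(1)]
  note p' = YR_YL_product_sum[OF ab(1) ab' t'[simplified] nz(2), unfolded scaled]
  have "embC \<kappa> * (embL uA * embL uC') + (embC \<kappa> * embC \<kappa> - embC \<kappa>) * (embL uB * embL uC')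
      - (embC \<kappa> - 1) * (embL uC * embL uC') = embL uA' * embL uC"
    by (rule scaled_pair_relation[OF nz p p'])
  then have "Poly_Mapping.single 0 \<kappa> * (uA * uC') + Poly_Mapping.single 0 (\<kappa> * \<kappa> - \<kappa>) * (uB * uC')
      - Poly_Mapping.single 0 (\<kappa> - 1) * (uC * uC') = uA' * uC"
    by (simp flip: embL_eq_iff embC_eq_embL)
  moreover have "\<not> (uA = uB \<and> uB = uC)"
  proof
    assume "uA = uB \<and> uB = uC"
    then have prod: "YR a b * YL a b = 1" and sum: "YR a b + YL a b = -1" using p nz by simp_all
    have "YR a b * YR a b + YR a b + 1 = YR a b * (YR a b + YL a b + 1)"
      using prod by (simp add: algebra_simps)
    then have "YR a b * YR a b + YR a b + 1 = 0" using sum by simp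
    then have "inF (YR a b)" by (rule inC_imp_inF[OF inC_if_sq_plus_self_plus_one_eq_0])
    then show False using rad by (simp add: radical_def)
  qed
  ultimately have "has_unequal_pair const_multiple [uA, uB, uC]"
    by (rule monomial_triple_has_unequal_pair[OF u u'(3) is_monomial_mult[OF u'(1) u(3)] \<kappa>])
  then show ?thesis unfolding t by (rule has_unequal_pair_embL)
qed

lemma htriples_have_unequal_pairs:
  assumes a: "a1 \<in> {0..<n} - I" "a2 \<in> {0..<n} - I" "a3 \<in> {0..<n} - I" "a1 \<noteq> a2" "a1 \<noteq> a3" "a2 \<noteq> a3"
    and rad12: "radical L R I i j a1 a2" and rad13: "radical L R I i j a1 a3"
    and eq: "YR a2 a3 = YL a2 a3" and \<kappa>: "YR a2 a3 = embC \<kappa>"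
  shows "\<forall>w \<in> {a2, a3}. has_unequal_pair propC (htriple L R I i j a1 w)"
proof -
  have "\<kappa> \<noteq> 0" "\<kappa> \<noteq> -1"
    using YR_nonzero[OF a(2,3)] one_plus_YR_nonzero[OF a(2,3,6)] \<kappa> by auto
  then have c: "- \<kappa> \<noteq> 0" "- \<kappa> \<noteq> 1" "inverse (- \<kappa>) \<noteq> 0" "inverse (- \<kappa>) \<noteq> 1"
    by (auto simp: minus_equation_iff) (metis inverse_1 inverse_inverse_eq inverse_minus_eq)
  have "\<forall>x \<in> {i, j}. \<forall>e \<in> {a1, a2, a3}. hfun L R (swap1 I x e) \<noteq> 0"
    using rad12 rad13 by (auto simp: radical_def)
  then have scaled: "YR a1 a3 = embC (- \<kappa>) * YR a1 a2" "YL a1 a3 = embC (- \<kappa>) * YL a1 a2"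
    using YR_YL_chain[OF a(1-3)] eq \<kappa> by simp_all
  then have "YR a1 a2 = embC (inverse (- \<kappa>)) * YR a1 a3" "YL a1 a2 = embC (inverse (- \<kappa>)) * YL a1 a3"
    using c by (simp_all flip: embC_mult)
  then show ?thesis
    using htriple_has_unequal_pair_if_scaled[OF a(1,2,4) a(3,5) rad12 rad13 c(1,2) scaled]
      htriple_has_unequal_pair_if_scaled[OF a(1,3,5) a(2,4) rad13 rad12 c(3,4)] by auto
qed

end

theorem mainTheorem11:
  fixes L R :: "'d::{finite,linorder} fbar mat"
    and k n :: nat and I :: "nat set" and i j a1 a2 a3 :: nat
  assumes "1 \<le> k" "k \<le> n"
    and "L \<in> carrier_mat k n" "R \<in> carrier_mat n k"
    and SA1: "\<forall>J \<in> ksubsets k n. DeltaR R J \<noteq> 0"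
    and SA2: "\<forall>J \<in> ksubsets k n. DeltaL L J \<noteq> 0 \<longrightarrow> is_Lunit (hfun L R J)"
    and SA3: "\<forall>c < n. \<exists>r < k. L $$ (r, c) \<noteq> 0"
    and I: "I \<in> ksubsets k n" "DeltaL L I \<noteq> 0"
    and ij: "i \<in> I" "j \<in> I" "i \<noteq> j"
    and alphas: "a1 \<in> {0..<n} - I" "a2 \<in> {0..<n} - I" "a3 \<in> {0..<n} - I"
      "a1 \<noteq> a2" "a1 \<noteq> a3" "a2 \<noteq> a3"
    and rad12: "radical L R I i j a1 a2"
    and rad13: "radical L R I i j a1 a3"
    and F23: "inF (Yval R I i j a2 a3)"
  shows "inC (Yval R I i j a2 a3) \<and>
    (\<forall>w \<in> {a2, a3}. \<exists>p < 3. \<exists>q < 3. p \<noteq> q \<and>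
        propC (htriple L R I i j a1 w ! p) (htriple L R I i j a1 w ! q) \<and>
        htriple L R I i j a1 w ! p \<noteq> htriple L R I i j a1 w ! q)"
proof -
  interpret laurent_exchange k n I i j L R
    using assms by unfold_locales auto
  have h3: "hfun L R (swap1 I i a3) \<noteq> 0" "hfun L R (swap1 I j a3) \<noteq> 0"
    using rad13 by (auto simp: radical_def)
  have eq: "YR a2 a3 = YL a2 a3" by (rule YR_eq_YL_if_inF[OF alphas rad12 h3 F23])
  have "hfun L R (swap1 I i a2) * hfun L R (swap1 I j a3) \<noteq> 0"
    "hfun L R (swap1 I i a3) * hfun L R (swap1 I j a2) \<noteq> 0"
    using rad12 h3 by (auto simp: radical_def)
  from YR_inC_if_eq_YL[OF alphas(2,3,6) this eq] have "inC (YR a2 a3)" .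
  moreover from this obtain \<kappa> where "YR a2 a3 = embC \<kappa>" by (auto simp: inC_def)
  then have "\<forall>w \<in> {a2, a3}. has_unequal_pair propC (htriple L R I i j a1 w)"
    by (rule htriples_have_unequal_pairs[OF alphas rad12 rad13 eq])
  moreover have "length (htriple L R I i j a1 w) = 3" for w by (simp add: htriple_def)
  ultimately show ?thesis unfolding has_unequal_pair_def by metis
qed

end
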